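(* Let $\nu\in A_2$ and $0<p<\infty$. Then $$\mathbf B^p_\nu(\mathbb R^n)=\bigcap_{\omega\in\{0,\frac13,\frac23\}^n}\mathbf B^p_\nu(\mathbb R^n,\mathcal D^\omega),\qquad \|b\|_{\mathbf B^p_\nu(\mathbb R^n)}\approx\sum_{\omega\in\{0,\frac13,\frac23\}^n}\|b\|_{\mathbf B^p_\nu(\mathbb R^n,\mathcal D^\omega)}.$$
   Context: $A_2$: weights $w$ with $\sup_Q(\frac1{|Q|}\int_Qw)(\frac1{|Q|}\int_Qw^{-1})<\infty$; $w(E)=\int_Ew$. For $\omega\in\{0,\frac13,\frac23\}^n$, $\mathcal D^\omega=\bigcup_{k\in\mathbb Z}\{2^{-k}([0,1)^n+m+(-1)^k\omega):m\in\mathbb Z^n\}$; $\mathcal D=\mathcal D^0$ is the standard dyadic system. $cQ$ is the concentric dilate of a cube $Q$ by factor $c$; $\langle b\rangle_E$ is the average over $E$. $\mathbf B^p_\nu(\mathbb R^n)$ is the set of $b\in L^1_{loc}$ with $\|b\|_{\mathbf B^p_\nu(\mathbb R^n)}:=\big\|\big\{\frac1{\nu(20\sqrt nQ)}\int_{20\sqrt nQ}|b-\langle b\rangle_{20\sqrt nQ}|\big\}_{Q\in\mathcal D}\big\|_{\ell^p}<\infty$; $\mathbf B^p_\nu(\mathbb R^n,\mathcal D^\omega)$ is the set of $b\in L^1_{loc}$ with $\|b\|^p_{\mathbf B^p_\nu(\mathbb R^n,\mathcal D^\omega)}:=\sum_{Q\in\mathcal D^\omega}\big(\frac1{\nu(Q)}\int_Q|b-\langle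 b\rangle_Q|\big)^p<\infty$. *)

theory Defs
  imports "HOL-Analysis.Analysis"
begin

definition hcube :: "real^'n \<Rightarrow> real \<Rightarrow> (real^'n) set" where
  "hcube a l = {x. \<forall>i. a$i \<le> x$i \<and> x$i < a$i + l}"

definition dil_cube :: "real \<Rightarrow> real^'n \<Rightarrow> real \<Rightarrow> (real^'n) set" where
  "dil_cube c a l = hcube (\<chi> i. a$i + l/2 - c*l/2) (c*l)"

definition loc_int :: "(real^'n \<Rightarrow> real) \<Rightarrow> bool" where
  "loc_int f \<longleftrightarrow> (\<forall>K. compact K \<longrightarrow> set_integrable lebesgue K f)"

definition avg :: "(real^'n \<Rightarrow> real) \<Rightarrow> (real^'n) set \<Rightarrow> real" where
  "avg f E = (LINT x:E|lebesgue. f x) / measure lebesgue E"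

definition wmeas :: "(real^'n \<Rightarrow> real) \<Rightarrow> (real^'n) set \<Rightarrow> real" where
  "wmeas w E = (LINT x:E|lebesgue. w x)"

definition A2 :: "(real^'n \<Rightarrow> real) \<Rightarrow> bool" where
  "A2 w \<longleftrightarrow> (\<forall>x. 0 \<le> w x) \<and> (AE x in lebesgue. 0 < w x) \<and>
     loc_int w \<and> loc_int (\<lambda>x. 1 / w x) \<and>
     (\<exists>C. \<forall>a l. 0 < l \<longrightarrow> avg w (hcube a l) * avg (\<lambda>x. 1 / w x) (hcube a l) \<le> C)"

definition osc :: "(real^'n \<Rightarrow> real) \<Rightarrow> (real^'n \<Rightarrow> real) \<Rightarrow> (real^'n) set \<Rightarrow> real" where
  "osc w b E = (LINT x:E|lebesgue. \<bar>b x - avg b E\<bar>) / wmeas w E"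

definition Omega :: "(real^'n) set" where
  "Omega = {\<omega>. \<forall>i. \<omega>$i \<in> {0, 1/3, 2/3}}"

text \<open>Lower corner and side length of the dyadic cube
  2^(-k) ([0,1)^n + m + (-1)^k omega) of the system D^omega.\<close>
definition dcorner :: "real^'n \<Rightarrow> int \<Rightarrow> int^'n \<Rightarrow> real^'n" where
  "dcorner \<omega> k m = (\<chi> i. 2 powr (- real_of_int k) * (real_of_int (m$i) + (-1) powi k * \<omega>$i))"

definition dside :: "int \<Rightarrow> real" where
  "dside k = 2 powr (- real_of_int k)"

definition dcube :: "real^'n \<Rightarrow> int \<Rightarrow> int^'n \<Rightarrow> (real^'n) set" where
  "dcube \<omega> k m = hcube (dcorner \<omega> k m) (dside k)"

text \<open>p-th power of the B^p_nu(R^n) norm: sum over Q in D (= D^0), indexed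
  bijectively by (k,m), of the normalised oscillation over 20 sqrt(n) Q.\<close>
definition besov_pow :: "(real^'n \<Rightarrow> real) \<Rightarrow> real \<Rightarrow> (real^'n \<Rightarrow> real) \<Rightarrow> ennreal" where
  "besov_pow w p b = (\<integral>\<^sup>+ (km :: int \<times> (int^'n)).
      ennreal (osc w b (dil_cube (20 * sqrt (real CARD('n))) (dcorner 0 (fst km) (snd km)) (dside (fst km))) powr p)
      \<partial>count_space UNIV)"

definition Besov :: "(real^'n \<Rightarrow> real) \<Rightarrow> real \<Rightarrow> (real^'n \<Rightarrow> real) set" where
  "Besov w p = {b. loc_int b \<and> besov_pow w p b < \<infinity>}"

definition besov_norm :: "(real^'n \<Rightarrow> real) \<Rightarrow> real \<Rightarrow> (real^'n \<Rightarrow> real) \<Rightarrow> real" where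
  "besov_norm w p b = enn2real (besov_pow w p b) powr (1 / p)"

definition besovD_pow :: "(real^'n \<Rightarrow> real) \<Rightarrow> real \<Rightarrow> real^'n \<Rightarrow> (real^'n \<Rightarrow> real) \<Rightarrow> ennreal" where
  "besovD_pow w p \<omega> b = (\<integral>\<^sup>+ (km :: int \<times> (int^'n)).
      ennreal (osc w b (dcube \<omega> (fst km) (snd km)) powr p) \<partial>count_space UNIV)"

definition BesovD :: "(real^'n \<Rightarrow> real) \<Rightarrow> real \<Rightarrow> real^'n \<Rightarrow> (real^'n \<Rightarrow> real) set" where
  "BesovD w p \<omega> = {b. loc_int b \<and> besovD_pow w p \<omega> b < \<infinity>}"

definition besovD_norm :: "(real^'n \<Rightarrow> real) \<Rightarrow> real \<Rightarrow> real^'n \<Rightarrow> (real^'n \<Rightarrow> real) \<Rightarrow> real" where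
  "besovD_norm w p \<omega> b = enn2real (besovD_pow w p \<omega> b) powr (1 / p)"

end

theory Submission
  imports Defs
begin

text \<open>
  For an \<open>A\<^sub>2\<close> weight \<open>\<nu>\<close>, Cauchy-Schwarz and the \<open>A\<^sub>2\<close> condition on a cube \<open>P\<close> give
  \<open>\<nu>(P) \<le> C (|P| / |E|)\<^sup>2 \<nu>(E)\<close> for \<open>E \<subseteq> P\<close>; hence the normalised oscillation over \<open>E\<close> is
  controlled by the one over any cube \<open>P \<supseteq> E\<close> of comparable size.

  A cube of \<open>D\<^sup>\<omega>\<close> lies in the \<open>c\<close>-dilate (\<open>c = 20\<surd>n \<ge> 3\<close>) of the standard dyadic cube of the
  same generation obtained by rounding its corner down, and this rounding is injective. Conversely,
  by the one-third trick the \<open>c\<close>-dilate of a dyadic cube of generation \<open>k\<close> lies in a cube of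
  generation \<open>k - j\<close> of one of the \<open>3\<^sup>n\<close> shifted systems once \<open>2\<^sup>j \<ge> 3c\<close>, and at most \<open>2\<^sup>j\<^sup>n\<close>
  dilates land in the same cube. Summing over cubes compares the \<open>p\<close>-th powers of the norms
  both ways, and since there are finitely many \<open>\<omega>\<close> this gives the equivalence of the norms.
\<close>

lemma hcube_borel [measurable]: "hcube (a::real^'n) l \<in> sets borel"
  unfolding hcube_def by measurable

lemma hcube_lebesgue [measurable]: "hcube (a::real^'n) l \<in> sets lebesgue"
  using hcube_borel by (metis sets_lborel sets_completionI_sets)

lemma hcube_subset_cbox: "hcube (a::real^'n) l \<subseteq> cbox a (\<chi> i. a$i + l)"
  by (auto simp: hcube_def mem_box_cart less_imp_le)

lemma box_subset_hcube: "box (a::real^'n) (\<chi> i. a$i + l) \<subseteq> hcube a l"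
  by (auto simp: hcube_def mem_box_cart less_imp_le)

lemma hcube_subset_hcube:
  assumes "\<And>i. a'$i \<le> a$i \<and> a$i + l \<le> a'$i + l'"
  shows "hcube (a::real^'n) l \<subseteq> hcube a' l'"
proof
  fix x assume "x \<in> hcube a l"
  then show "x \<in> hcube a' l'"
    unfolding hcube_def using assms by (smt (verit) mem_Collect_eq)
qed

lemma hcube_fmeasurable: "hcube (a::real^'n) l \<in> fmeasurable lebesgue"
  by (rule fmeasurableI2[OF lmeasurable_cbox hcube_subset_cbox hcube_lebesgue])

lemma emeasure_hcube_finite: "emeasure lebesgue (hcube (a::real^'n) l) < \<infinity>"
  using hcube_fmeasurable by (simp add: fmeasurable_def)

lemma emeasure_subset_hcube_finite: "E \<subseteq> hcube (a::real^'n) l \<Longrightarrow> emeasure lebesgue E < \<infinity>"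
  using emeasure_mono[OF _ hcube_lebesgue] emeasure_hcube_finite le_less_trans by blast

lemma measure_hcube:
  assumes "0 < l"
  shows "measure lebesgue (hcube (a::real^'n) l) = l ^ CARD('n)"
proof (rule antisym)
  have "a \<in> cbox a (\<chi> i. a$i + l)" using assms by (simp add: mem_box_cart)
  then have "cbox a (\<chi> i. a$i + l) \<noteq> {}" by blast
  then have cbox: "measure lebesgue (cbox a (\<chi> i. a$i + l)) = l ^ CARD('n)"
    by (simp add: content_cbox_cart)
  moreover have "measure lebesgue (box a (\<chi> i. a$i + l)) = measure lebesgue (cbox a (\<chi> i. a$i + l))"
    by (simp add: measure_lborel_box_eq measure_lborel_cbox_eq)
  ultimately show "l ^ CARD('n) \<le> measure lebesgue (hcube a l)"
    using measure_mono_fmeasurable[OF box_subset_hcube[of a l] _ hcube_fmeasurable] by simp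
  show "measure lebesgue (hcube a l) \<le> l ^ CARD('n)"
    using measure_mono_fmeasurable[OF hcube_subset_cbox[of a l] hcube_lebesgue] cbox by simp
qed

lemma hcube_corner_mem: "0 < l \<Longrightarrow> a \<in> hcube a l"
  by (simp add: hcube_def)

lemma loc_int_imp_set_integrable_hcube:
  "loc_int f \<Longrightarrow> set_integrable lebesgue (hcube (a::real^'n) l) f"
  unfolding loc_int_def
  using set_integrable_subset[OF _ hcube_lebesgue hcube_subset_cbox] compact_cbox by blast

section \<open>Oscillations and \<open>A\<^sub>2\<close> weights\<close>

lemma set_integral_mono_set:
  fixes f :: "'a \<Rightarrow> real"
  assumes "A \<in> sets M" "A \<subseteq> B" "set_integrable M B f" "\<And>x. x \<in> B \<Longrightarrow> 0 \<le> f x"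
  shows "(LINT x:A|M. f x) \<le> (LINT x:B|M. f x)"
  using assms set_integrable_subset[OF assms(3,1,2)]
  unfolding set_lebesgue_integral_def set_integrable_def
  by (intro integral_mono) (auto split: split_indicator)

lemma set_integral_abs_diff_avg_le:
  fixes b :: "'a \<Rightarrow> real"
  assumes Q: "Q \<in> sets M" "emeasure M Q < \<infinity>" "0 < measure M Q" and b: "set_integrable M Q b"
  shows "(LINT x:Q|M. \<bar>b x - (LINT y:Q|M. b y) / measure M Q\<bar>) \<le> 2 * (LINT x:Q|M. \<bar>b x - c\<bar>)"
proof -
  define a where "a = (LINT y:Q|M. b y) / measure M Q"
  have const: "set_integrable M Q (\<lambda>_. d)" for d :: real
    using Q unfolding set_integrable_def by simp
  have int_const: "(LINT x:Q|M. d) = measure M Q * d" for d :: real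
    using Q by (simp add: set_integral_const less_top[symmetric])
  have bc: "set_integrable M Q (\<lambda>x. b x - c)"
    using b const by (rule set_integral_diff)
  have "(LINT x:Q|M. b x - c) = measure M Q * (a - c)"
    using set_integral_diff(2)[OF b const] Q(3) by (simp add: int_const a_def algebra_simps)
  then have "measure M Q * \<bar>a - c\<bar> \<le> (LINT x:Q|M. \<bar>b x - c\<bar>)"
    using set_integral_norm_bound[OF bc] Q(3) by (simp add: abs_mult)
  moreover have "(LINT x:Q|M. \<bar>b x - a\<bar>) \<le> (LINT x:Q|M. \<bar>b x - c\<bar> + \<bar>a - c\<bar>)"
    using bc const by (intro set_integral_mono set_integrable_abs set_integral_add set_integral_diff b) auto
  moreover have "(LINT x:Q|M. \<bar>b x - c\<bar> + \<bar>a - c\<bar>) = (LINT x:Q|M. \<bar>b x - c\<bar>) + measure M Q * \<bar>a - c\<bar>"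
    using set_integral_add(2)[OF set_integrable_abs[OF bc] const] by (simp add: int_const)
  ultimately show ?thesis unfolding a_def by linarith
qed

definition A2_bounded_by :: "(real^'n \<Rightarrow> real) \<Rightarrow> real \<Rightarrow> bool" where
  "A2_bounded_by w C \<longleftrightarrow>
     (\<forall>a l. 0 < l \<longrightarrow> avg w (hcube a l) * avg (\<lambda>x. 1 / w x) (hcube a l) \<le> C)"

lemma A2_imp_bounded_by: "A2 w \<Longrightarrow> \<exists>C\<ge>0. A2_bounded_by w C"
  unfolding A2_def A2_bounded_by_def by (meson max.cobounded1 max.cobounded2 order_trans)

lemma wmeas_nonneg: "(\<And>x. 0 \<le> w x) \<Longrightarrow> 0 \<le> wmeas w E"
  unfolding wmeas_def set_lebesgue_integral_def
  by (intro Bochner_Integration.integral_nonneg) (auto split: split_indicator)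

lemma wmeas_pos:
  assumes w: "AE x in lebesgue. 0 < w x" "\<And>x. 0 \<le> w x" "set_integrable lebesgue E w"
    and E: "E \<in> sets lebesgue" "0 < measure lebesgue E"
  shows "0 < wmeas w E"
proof (rule ccontr)
  assume "\<not> 0 < wmeas w E"
  then have "wmeas w E = 0" using wmeas_nonneg[of w E, OF w(2)] by simp
  then have "AE x in lebesgue. indicator E x *\<^sub>R w x = 0"
    using w unfolding wmeas_def set_lebesgue_integral_def set_integrable_def
    by (subst integral_nonneg_eq_0_iff_AE[symmetric]) auto
  then have "AE x in lebesgue. x \<notin> E"
    using w(1) by eventually_elim (auto split: split_indicator)
  then have "emeasure lebesgue E = 0" using E(1) by (simp add: AE_iff_measurable[OF _ refl])
  then show False using E(2) by (simp add: measure_def)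
qed

lemma measure_sq_le_wmeas_mult:
  assumes E: "E \<in> sets lebesgue" "emeasure lebesgue E < \<infinity>"
    and w: "AE x in lebesgue. 0 < w x" "\<And>x. 0 \<le> w x"
    and iw: "set_integrable lebesgue E w" and iw': "set_integrable lebesgue E (\<lambda>x. 1 / w x)"
  shows "(measure lebesgue E)^2 \<le> wmeas w E * (LINT x:E|lebesgue. 1 / w x)"
proof (cases "measure lebesgue E = 0")
  case True
  have "0 \<le> (LINT x:E|lebesgue. 1 / w x)"
    using wmeas_nonneg[of "\<lambda>x. 1 / w x"] w(2) by (simp add: wmeas_def)
  then show ?thesis using True wmeas_nonneg[of w E, OF w(2)] by simp
next
  case False
  define m where "m = measure lebesgue E"
  define t where "t = m / wmeas w E"
  have m: "0 < m" using False unfolding m_def by (simp add: zero_less_measure_iff)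
  have t: "0 < t" using m wmeas_pos[OF w iw E(1)] unfolding t_def m_def by simp
  \<comment> \<open>AM-GM: \<open>2 \<le> t w + 1 / (t w)\<close> pointwise, integrated with \<open>t = |E| / w(E)\<close>.\<close>
  have "(LINT x:E|lebesgue. 2) \<le> (LINT x:E|lebesgue. t * w x + (1 / w x) / t)"
  proof (rule set_integral_mono_AE)
    show "set_integrable lebesgue E (\<lambda>x. 2::real)"
      using E unfolding set_integrable_def by simp
    show "set_integrable lebesgue E (\<lambda>x. t * w x + (1 / w x) / t)"
      by (intro set_integral_add(1) set_integrable_mult_right set_integrable_divide iw iw')
    show "AE x\<in>E in lebesgue. 2 \<le> t * w x + 1 / w x / t"
      using w(1)
    proof eventually_elim
      case (elim x)
      have "0 \<le> (t * w x - 1)^2 / (t * w x)" using elim t by simp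
      then show ?case using elim t by (simp add: power2_eq_square field_simps)
    qed
  qed
  also have "\<dots> = t * wmeas w E + (LINT x:E|lebesgue. 1 / w x) / t"
    unfolding wmeas_def
    by (simp only: set_integral_add(2)[OF set_integrable_mult_right[OF iw] set_integrable_divide[OF iw']]
        set_integral_mult_right set_integral_divide_zero)
  finally have "2 * m \<le> t * wmeas w E + (LINT x:E|lebesgue. 1 / w x) / t"
    using E unfolding m_def by (simp add: set_integral_const less_top[symmetric])
  then show ?thesis
    using m t wmeas_pos[OF w iw E(1)] unfolding t_def m_def[symmetric]
    by (simp add: field_simps power2_eq_square)
qed

lemma hcube_side_pos:
  assumes "x \<in> hcube (a::real^'n) l"
  shows "0 < l"
  using assms by (force simp: hcube_def)

lemma A2_doubling:
  fixes w :: "real^'n \<Rightarrow> real"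
  assumes A2: "A2 w" "A2_bounded_by w C"
    and E: "E \<in> sets lebesgue" "E \<subseteq> hcube a l" "0 < measure lebesgue E"
  shows "wmeas w (hcube a l) \<le> C * (l ^ CARD('n) / measure lebesgue E)^2 * wmeas w E"
proof -
  define P where "P = hcube a l"
  define \<sigma> where "\<sigma> = (\<lambda>S. LINT x:S|lebesgue. 1 / w x)"
  have w: "AE x in lebesgue. 0 < w x" "\<And>x. 0 \<le> w x" "loc_int w" "loc_int (\<lambda>x. 1 / w x)"
    using A2(1) unfolding A2_def by auto
  have "E \<noteq> {}" using E(3) by auto
  then have l: "0 < l" using E(2) hcube_side_pos by blast
  have P: "measure lebesgue P = l ^ CARD('n)" "0 < l ^ CARD('n)"
    using measure_hcube[OF l] l unfolding P_def by simp_all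
  have iP: "set_integrable lebesgue P w" "set_integrable lebesgue P (\<lambda>x. 1 / w x)"
    using w(3,4) unfolding P_def by (auto intro: loc_int_imp_set_integrable_hcube)
  then have iE: "set_integrable lebesgue E w" "set_integrable lebesgue E (\<lambda>x. 1 / w x)"
    using E(1,2) unfolding P_def by (auto intro: set_integrable_subset)
  have wE: "0 \<le> wmeas w E" and wP: "0 \<le> wmeas w P"
    using wmeas_nonneg[of w, OF w(2)] by auto
  have "(measure lebesgue E)^2 \<le> wmeas w E * \<sigma> E"
    unfolding \<sigma>_def by (rule measure_sq_le_wmeas_mult[OF E(1) emeasure_subset_hcube_finite[OF E(2)] w(1,2) iE])
  also have "\<dots> \<le> wmeas w E * \<sigma> P"
    using E w(2) iP(2) wE unfolding \<sigma>_def P_def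
    by (intro mult_left_mono set_integral_mono_set) auto
  finally have "wmeas w P * (measure lebesgue E)^2 \<le> wmeas w P * (wmeas w E * \<sigma> P)"
    using wP by (rule mult_left_mono)
  also have "\<dots> = wmeas w E * (wmeas w P * \<sigma> P)"
    by (simp add: mult_ac)
  also have "avg w P * avg (\<lambda>x. 1 / w x) P \<le> C"
    using A2(2) l unfolding A2_bounded_by_def P_def by blast
  then have "wmeas w P * \<sigma> P / (l ^ CARD('n))^2 \<le> C"
    using P(1) unfolding avg_def wmeas_def \<sigma>_def by (simp add: power2_eq_square)
  then have "wmeas w P * \<sigma> P \<le> C * (l ^ CARD('n))^2"
    using l by (simp add: pos_divide_le_eq)
  then have "wmeas w E * (wmeas w P * \<sigma> P) \<le> wmeas w E * (C * (l ^ CARD('n))^2)"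
    using wE by (rule mult_left_mono)
  finally show ?thesis
    using E(3) unfolding P_def by (simp add: field_simps power2_eq_square)
qed

lemma integral_abs_diff_avg_mono:
  fixes b :: "real^'n \<Rightarrow> real"
  assumes E: "E \<in> sets lebesgue" "E \<subseteq> P" "0 < measure lebesgue E"
    and P: "P \<in> sets lebesgue" "emeasure lebesgue P < \<infinity>" and b: "set_integrable lebesgue P b"
  shows "(LINT x:E|lebesgue. \<bar>b x - avg b E\<bar>) \<le> 2 * (LINT x:P|lebesgue. \<bar>b x - avg b P\<bar>)"
proof -
  have "emeasure lebesgue E < \<infinity>"
    using emeasure_mono[OF E(2) P(1)] P(2) by (rule le_less_trans)
  then have "(LINT x:E|lebesgue. \<bar>b x - avg b E\<bar>) \<le> 2 * (LINT x:E|lebesgue. \<bar>b x - avg b P\<bar>)"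
    unfolding avg_def[of b E]
    using E(1) E(3) set_integrable_subset[OF b E(1,2)] by (intro set_integral_abs_diff_avg_le)
  also have "\<dots> \<le> 2 * (LINT x:P|lebesgue. \<bar>b x - avg b P\<bar>)"
  proof -
    have "set_integrable lebesgue P (\<lambda>x. \<bar>b x - avg b P\<bar>)"
      by (intro set_integrable_abs set_integral_diff(1) b)
        (simp add: set_integrable_def integrable_real_indicator[OF P])
    then show ?thesis using set_integral_mono_set[OF E(1,2)] by simp
  qed
  finally show ?thesis .
qed

lemma osc_le_osc_hcube:
  fixes w b :: "real^'n \<Rightarrow> real"
  assumes A2: "A2 w" "A2_bounded_by w C" and b: "loc_int b"
    and E: "E \<in> sets lebesgue" "E \<subseteq> hcube a l" "0 < measure lebesgue E"
  shows "osc w b E \<le> 2 * C * (l ^ CARD('n) / measure lebesgue E)^2 * osc w b (hcube a l)"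
proof -
  define P where "P = hcube a l"
  define K where "K = C * (l ^ CARD('n) / measure lebesgue E)^2"
  define I where "I = (\<lambda>S. LINT x:S|lebesgue. \<bar>b x - avg b S\<bar>)"
  have w: "AE x in lebesgue. 0 < w x" "\<And>x. 0 \<le> w x" "loc_int w"
    using A2(1) unfolding A2_def by auto
  have P_meas: "0 < measure lebesgue P"
    using E measure_mono_fmeasurable[OF E(2,1) hcube_fmeasurable] unfolding P_def by linarith
  have wE: "0 < wmeas w E"
    using wmeas_pos[of w E, OF w(1,2) _ E(1,3)] set_integrable_subset[OF _ E(1,2)]
      loc_int_imp_set_integrable_hcube[OF w(3)] by blast
  have wP: "0 < wmeas w P"
    using wmeas_pos[of w P, OF w(1,2) loc_int_imp_set_integrable_hcube[OF w(3), of a l, folded P_def] _ P_meas]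
    unfolding P_def by simp
  have IE: "I E \<le> 2 * I P"
    unfolding I_def P_def
    by (rule integral_abs_diff_avg_mono[OF E(1,2,3) hcube_lebesgue emeasure_hcube_finite
          loc_int_imp_set_integrable_hcube[OF b]])
  have IP: "0 \<le> I P"
    unfolding I_def set_lebesgue_integral_def
    by (intro Bochner_Integration.integral_nonneg) (auto split: split_indicator)
  have "wmeas w P \<le> K * wmeas w E"
    using A2_doubling[OF A2 E] unfolding P_def K_def .
  then have "I P * wmeas w P \<le> I P * (K * wmeas w E)"
    using IP by (rule mult_left_mono)
  then have "2 * I P / wmeas w E \<le> 2 * K * (I P / wmeas w P)"
    using wE wP by (simp add: field_simps)
  with IE wE have "I E / wmeas w E \<le> 2 * K * (I P / wmeas w P)"
    by (meson divide_right_mono less_imp_le order.trans)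
  then show ?thesis
    unfolding osc_def I_def P_def K_def by (simp add: mult.assoc)
qed

section \<open>Shifted dyadic systems\<close>

lemma dside_pos: "0 < dside k"
  unfolding dside_def by simp

lemma dside_diff: "dside (k - int j) = 2 ^ j * dside k"
  unfolding dside_def by (simp add: powr_add[symmetric] powr_realpow[symmetric])

lemma dcube_eq_hcube:
  "dcube \<omega> k m = hcube (\<chi> i. dside k * (m$i + (-1) powi k * \<omega>$i)) (dside k)"
  unfolding dcube_def dcorner_def dside_def ..

lemma dcube_lebesgue: "dcube \<omega> k m \<in> sets lebesgue"
  unfolding dcube_def by (rule hcube_lebesgue)

lemma measure_dcube: "measure lebesgue (dcube (\<omega> :: real^'n) k m) = dside k ^ CARD('n)"
  unfolding dcube_def by (rule measure_hcube[OF dside_pos])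

lemma dil_cube_dcorner_0:
  "dil_cube c (dcorner 0 k m) (dside k) = hcube (\<chi> i. dside k * (m$i + (1 - c) / 2)) (c * dside k)"
proof -
  have "dcorner 0 k m $ i + dside k / 2 - c * dside k / 2 = dside k * (m$i + (1 - c) / 2)" for i
    unfolding dcorner_def dside_def by (simp add: algebra_simps diff_divide_distrib)
  then show ?thesis
    unfolding dil_cube_def by simp
qed

lemma dcube_subset_dil_cube:
  assumes "3 \<le> c"
  shows "dcube \<omega> k m \<subseteq> dil_cube c (dcorner 0 k (\<chi> i. m$i + \<lfloor>(-1) powi k * \<omega>$i\<rfloor>)) (dside k)"
proof -
  have "dside k * (u + \<lfloor>t\<rfloor> + (1 - c) / 2) \<le> dside k * (u + t) \<and>
        dside k * (u + t) + dside k \<le> dside k * (u + \<lfloor>t\<rfloor> + (1 - c) / 2) + c * dside k"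
    for u t :: real
  proof -
    have "(1 - c) / 2 \<le> -1" "2 \<le> (1 - c) / 2 + c"
      using assms by (simp_all add: field_simps)
    then have "u + \<lfloor>t\<rfloor> + (1 - c) / 2 \<le> u + t" "u + t + 1 \<le> u + \<lfloor>t\<rfloor> + (1 - c) / 2 + c"
      using of_int_floor_le[of t] real_of_int_floor_add_one_gt[of t] by linarith+
    then have "dside k * (u + \<lfloor>t\<rfloor> + (1 - c) / 2) \<le> dside k * (u + t)"
      "dside k * (u + t + 1) \<le> dside k * (u + \<lfloor>t\<rfloor> + (1 - c) / 2 + c)"
      using dside_pos[of k] by (simp_all add: mult_left_mono)
    then show ?thesis
      by (simp add: algebra_simps)
  qed
  then show ?thesis
    unfolding dcube_eq_hcube dil_cube_dcorner_0 by (intro hcube_subset_hcube) (simp add: add.assoc)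
qed

text \<open>The one-third trick: the points \<open>m + \<sigma> w\<close> with \<open>m \<in> \<int>\<close>, \<open>w \<in> {0, 1/3, 2/3}\<close> form
  the grid \<open>\<int>/3\<close>, so an interval of length \<open>\<le> 1/3\<close> starting just after a grid point
  \<open>\<lfloor>3y\<rfloor>/3\<close> fits into a unit interval starting there.\<close>
lemma one_third_trick:
  fixes y d \<sigma> :: real
  assumes "d \<le> 1/3" "\<sigma> = 1 \<or> \<sigma> = -1"
  shows "\<exists>w\<in>{0, 1/3, 2/3}. \<exists>m::int. m + \<sigma> * w \<le> y \<and> y + d \<le> m + \<sigma> * w + 1"
proof -
  define g where "g = \<lfloor>3 * y\<rfloor>"
  define q where "q = g div 3"
  define r where "r = g mod 3"
  have g: "g = 3 * q + r" and r: "r = 0 \<or> r = 1 \<or> r = 2"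
    unfolding q_def r_def by auto
  have "\<exists>w\<in>{0, 1/3, 2/3}. \<exists>m::int. m + \<sigma> * w = g / 3"
  proof (cases "\<sigma> = 1")
    case True
    then show ?thesis using r g by (intro bexI[where x="r / 3"] exI[where x=q]) auto
  next
    case False
    then have \<sigma>: "\<sigma> = -1" using assms(2) by simp
    consider "r = 0" | "r = 1" | "r = 2" using r by blast
    then show ?thesis
    proof cases
      case 1
      then show ?thesis using g \<sigma> by (intro bexI[where x=0] exI[where x=q]) auto
    next
      case 2
      then show ?thesis using g \<sigma> by (intro bexI[where x="2/3"] exI[where x="q + 1"]) auto
    next
      case 3
      then show ?thesis using g \<sigma> by (intro bexI[where x="1/3"] exI[where x="q + 1"]) auto
    qed
  qed
  then obtain w m where "w \<in> {0, 1/3, 2/3}" and "real_of_int m + \<sigma> * w = g / 3"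
    by blast
  moreover have "g / 3 \<le> y" "y < g / 3 + 1/3"
    unfolding g_def by linarith+
  ultimately show ?thesis
    using assms(1) by (intro bexI[of _ w] exI[of _ m]) auto
qed

lemma dil_cube_subset_dcube:
  assumes c: "0 < c" "3 * c \<le> 2 ^ j"
  shows "\<exists>\<omega>\<in>Omega. \<exists>m'. dil_cube c (dcorner 0 k m) (dside k) \<subseteq> dcube \<omega> (k - int j) m'"
proof -
  define s where "s = dside (k - int j)"
  define \<sigma> :: real where "\<sigma> = (-1) powi (k - int j)"
  define y where "y i = (m$i + (1 - c) / 2) / 2 ^ j" for i
  have s: "0 < s" unfolding s_def by (rule dside_pos)
  have \<sigma>: "\<sigma> = 1 \<or> \<sigma> = -1" unfolding \<sigma>_def by (simp add: power_int_minus_left)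
  have "c / 2 ^ j \<le> 1/3" using c by (simp add: field_simps)
  then have "\<forall>i. \<exists>w m'. w \<in> {0, 1/3, 2/3} \<and> real_of_int m' + \<sigma> * w \<le> y i \<and>
                y i + c / 2 ^ j \<le> real_of_int m' + \<sigma> * w + 1"
    using one_third_trick[OF _ \<sigma>] by blast
  then obtain W M where W: "\<And>i. W i \<in> {0, 1/3, 2/3}"
    and M: "\<And>i. real_of_int (M i) + \<sigma> * W i \<le> y i" "\<And>i. y i + c / 2 ^ j \<le> real_of_int (M i) + \<sigma> * W i + 1"
    by metis
  have "s * (M i + \<sigma> * W i) \<le> s * y i" "s * (y i + c / 2 ^ j) \<le> s * (M i + \<sigma> * W i + 1)" for i
    using M s by (simp_all add: mult_left_mono)
  moreover have "s * y i = dside k * (m$i + (1 - c) / 2)" "s * (c / 2 ^ j) = c * dside k" for i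
    unfolding s_def y_def dside_diff by simp_all
  ultimately have "dil_cube c (dcorner 0 k m) (dside k) \<subseteq> dcube (\<chi> i. W i) (k - int j) (\<chi> i. M i)"
    unfolding dil_cube_dcorner_0 dcube_eq_hcube s_def[symmetric] \<sigma>_def[symmetric]
    by (intro hcube_subset_hcube) (simp add: distrib_left)
  moreover have "(\<chi> i. W i) \<in> Omega" using W by (simp add: Omega_def)
  ultimately show ?thesis by blast
qed

lemma dil_cube_subset_dcube_unique:
  assumes c: "0 < c"
    and sub: "dil_cube c (dcorner 0 k m1) (dside k) \<subseteq> dcube \<omega> (k - int j) m'"
      "dil_cube c (dcorner 0 k m2) (dside k) \<subseteq> dcube \<omega> (k - int j) m'"
    and cong: "\<And>i. m1$i mod 2^j = m2$i mod 2^j"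
  shows "m1 = m2"
proof -
  define e where "e i = dside (k - int j) * (m'$i + (-1) powi (k - int j) * \<omega>$i)" for i
  define a where "a r = dside k * (r + (1 - c) / 2)" for r :: real
  have corner: "e i \<le> a (m$i) \<and> a (m$i) < e i + 2 ^ j * dside k"
    if "dil_cube c (dcorner 0 k m) (dside k) \<subseteq> dcube \<omega> (k - int j) m'" for m i
  proof -
    have "(\<chi> i. a (m$i)) \<in> dil_cube c (dcorner 0 k m) (dside k)"
      unfolding dil_cube_dcorner_0 a_def using c dside_pos[of k] by (intro hcube_corner_mem) simp
    then show ?thesis
      using that unfolding dcube_eq_hcube hcube_def dside_diff e_def by auto
  qed
  have "m1$i = m2$i" for i
  proof (rule ccontr)
    assume ne: "m1$i \<noteq> m2$i"
    have "\<bar>a (m1$i) - a (m2$i)\<bar> < 2 ^ j * dside k"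
      using corner[OF sub(1), of i] corner[OF sub(2), of i] by linarith
    moreover have "a (m1$i) - a (m2$i) = dside k * (m1$i - m2$i)"
      unfolding a_def by (simp add: algebra_simps)
    ultimately have "dside k * \<bar>m1$i - m2$i\<bar> < dside k * 2 ^ j"
      using dside_pos[of k] by (simp add: abs_mult mult.commute)
    then have "real_of_int \<bar>m1$i - m2$i\<bar> < real_of_int (2 ^ j)"
      using dside_pos[of k] by simp
    then have "\<bar>m1$i - m2$i\<bar> < 2 ^ j"
      by (simp only: of_int_less_iff)
    moreover have "2 ^ j dvd m1$i - m2$i" using cong[of i] by (simp add: mod_eq_dvd_iff)
    ultimately show False
      using ne dvd_imp_le_int[of "m1$i - m2$i" "2 ^ j"] by simp
  qed
  then show ?thesis by (simp add: vec_eq_iff)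
qed

lemma bij_betw_vec_nth_PiE:
  "bij_betw vec_nth {v :: 'a^'n. \<forall>i. v$i \<in> T} (PiE UNIV (\<lambda>_. T))"
  by (intro bij_betwI[of _ _ _ vec_lambda]) (auto simp: vec_eq_iff)

lemma finite_vec_set:
  assumes "finite T"
  shows "finite {v :: 'a^'n. \<forall>i. v$i \<in> T}"
  using bij_betw_finite[OF bij_betw_vec_nth_PiE[of T]] assms by (simp add: finite_PiE)

lemma card_vec_set: "card {v :: 'a^'n. \<forall>i. v$i \<in> T} = card T ^ CARD('n)"
  using bij_betw_same_card[OF bij_betw_vec_nth_PiE[of T]] by (simp add: card_PiE)

lemma finite_Omega: "finite (Omega :: (real^'n) set)"
  unfolding Omega_def by (rule finite_vec_set) simp

lemma zero_in_Omega: "0 \<in> Omega"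
  unfolding Omega_def by simp

section \<open>Comparison of the sums over cubes\<close>

definition besov_dil_pow :: "(real^'n \<Rightarrow> real) \<Rightarrow> real \<Rightarrow> real \<Rightarrow> (real^'n \<Rightarrow> real) \<Rightarrow> ennreal" where
  "besov_dil_pow w p c b = (\<integral>\<^sup>+ (km :: int \<times> (int^'n)).
      ennreal (osc w b (dil_cube c (dcorner 0 (fst km) (snd km)) (dside (fst km))) powr p)
      \<partial>count_space UNIV)"

lemma besov_pow_eq_besov_dil_pow:
  "besov_pow w p b = besov_dil_pow w p (20 * sqrt (real CARD('n))) (b :: real^'n \<Rightarrow> real)"
  unfolding besov_pow_def besov_dil_pow_def ..

lemma nn_integral_count_space_le_sum_fibres:
  fixes F :: "'a \<Rightarrow> ennreal" and G :: "'c \<Rightarrow> 'b \<Rightarrow> ennreal"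
  assumes S: "finite S" "\<And>x. cls x \<in> S" and inj: "\<And>z. inj_on tgt {x. cls x = z}"
    and FG: "\<And>x. F x \<le> G (cls x) (tgt x)"
  shows "(\<integral>\<^sup>+x. F x \<partial>count_space UNIV) \<le> (\<Sum>z\<in>S. \<integral>\<^sup>+y. G z y \<partial>count_space UNIV)"
proof -
  have "(\<integral>\<^sup>+x. F x \<partial>count_space UNIV)
      \<le> (\<integral>\<^sup>+x. (\<Sum>z\<in>S. G z (tgt x) * indicator {x. cls x = z} x) \<partial>count_space UNIV)"
  proof (intro nn_integral_mono)
    fix x
    have "G (cls x) (tgt x) * indicator {y. cls y = cls x} x
        \<le> (\<Sum>z\<in>S. G z (tgt x) * indicator {y. cls y = z} x)"
      by (rule member_le_sum[OF S(2) _ S(1)]) simp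
    then show "F x \<le> (\<Sum>z\<in>S. G z (tgt x) * indicator {x. cls x = z} x)"
      using FG[of x] by simp
  qed
  also have "\<dots> = (\<Sum>z\<in>S. \<integral>\<^sup>+x. G z (tgt x) * indicator {x. cls x = z} x \<partial>count_space UNIV)"
    by (rule nn_integral_sum) simp
  also have "\<dots> \<le> (\<Sum>z\<in>S. \<integral>\<^sup>+y. G z y \<partial>count_space UNIV)"
  proof (intro sum_mono)
    fix z
    have "(\<integral>\<^sup>+x. G z (tgt x) * indicator {x. cls x = z} x \<partial>count_space UNIV)
        = (\<integral>\<^sup>+y. G z y \<partial>count_space (tgt ` {x. cls x = z}))"
      using inj_on_imp_bij_betw[OF inj]
      by (simp add: nn_integral_count_space_indicator[symmetric] nn_integral_bij_count_space)
    also have "\<dots> \<le> (\<integral>\<^sup>+y. G z y \<partial>count_space UNIV)"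
      by (auto simp: nn_integral_count_space_indicator intro!: nn_integral_mono split: split_indicator)
    finally show "(\<integral>\<^sup>+x. G z (tgt x) * indicator {x. cls x = z} x \<partial>count_space UNIV)
        \<le> (\<integral>\<^sup>+y. G z y \<partial>count_space UNIV)" .
  qed
  finally show ?thesis .
qed

lemma osc_nonneg: "(\<And>x. 0 \<le> w x) \<Longrightarrow> 0 \<le> osc w b E"
  unfolding osc_def set_lebesgue_integral_def
  by (intro divide_nonneg_nonneg wmeas_nonneg Bochner_Integration.integral_nonneg)
    (auto split: split_indicator)

lemma ennreal_powr_le_mult_powr:
  fixes u v K p :: real
  assumes "0 \<le> u" "u \<le> K * v" "0 \<le> v" "0 \<le> K" "0 \<le> p"
  shows "ennreal (u powr p) \<le> ennreal (K powr p) * ennreal (v powr p)"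
proof -
  have "u powr p \<le> (K * v) powr p" using assms by (intro powr_mono2) auto
  also have "\<dots> = K powr p * v powr p" using assms by (simp add: powr_mult)
  finally show ?thesis by (simp add: ennreal_mult[symmetric])
qed

lemma osc_powr_le_osc_hcube_powr:
  fixes w b :: "real^'n \<Rightarrow> real"
  assumes A2: "A2 w" "A2_bounded_by w C" "0 \<le> C" and b: "loc_int b" and p: "0 \<le> p"
    and E: "E \<in> sets lebesgue" "E \<subseteq> hcube a l" "measure lebesgue E = r ^ CARD('n)" "0 < r"
  shows "ennreal (osc w b E powr p)
    \<le> ennreal ((2 * C * ((l / r) ^ CARD('n))^2) powr p) * ennreal (osc w b (hcube a l) powr p)"
proof (rule ennreal_powr_le_mult_powr)
  have "\<And>x. 0 \<le> w x" using A2(1) unfolding A2_def by auto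
  then show "0 \<le> osc w b E" "0 \<le> osc w b (hcube a l)" by (simp_all add: osc_nonneg)
  show "osc w b E \<le> 2 * C * ((l / r) ^ CARD('n))^2 * osc w b (hcube a l)"
    using osc_le_osc_hcube[OF A2(1,2) b E(1,2)] E(3,4) by (simp add: power_divide)
qed (use A2(3) p in simp_all)

lemma osc_dcube_powr_le_osc_dil_cube_powr:
  fixes w b :: "real^'n \<Rightarrow> real"
  assumes A2: "A2 w" "A2_bounded_by w C" "0 \<le> C" and b: "loc_int b" and p: "0 \<le> p" and c: "3 \<le> c"
  shows "ennreal (osc w b (dcube \<omega> k m) powr p) \<le> ennreal ((2 * C * (c ^ CARD('n))^2) powr p) *
    ennreal (osc w b (dil_cube c (dcorner 0 k (\<chi> i. m$i + \<lfloor>(-1) powi k * \<omega>$i\<rfloor>)) (dside k)) powr p)"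
proof -
  define m' where "m' = (\<chi> i. m$i + \<lfloor>(-1) powi k * \<omega>$i\<rfloor>)"
  have "dcube \<omega> k m \<subseteq> hcube (\<chi> i. dside k * (m'$i + (1 - c) / 2)) (c * dside k)"
    using dcube_subset_dil_cube[OF c] unfolding dil_cube_dcorner_0 m'_def .
  from osc_powr_le_osc_hcube_powr[OF A2 b p dcube_lebesgue this measure_dcube dside_pos]
  show ?thesis
    unfolding dil_cube_dcorner_0 m'_def[symmetric] using dside_pos[of k] by simp
qed

lemma besovD_pow_le_besov_dil_pow:
  fixes w b :: "real^'n \<Rightarrow> real"
  assumes A2: "A2 w" "A2_bounded_by w C" "0 \<le> C" and b: "loc_int b" and p: "0 < p" and c: "3 \<le> c"
  shows "besovD_pow w p \<omega> b \<le> ennreal ((2 * C * (c ^ CARD('n))^2) powr p) * besov_dil_pow w p c b"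
proof -
  define K where "K = ennreal ((2 * C * (c ^ CARD('n))^2) powr p)"
  define D where "D = (\<lambda>km :: int \<times> (int^'n).
    ennreal (osc w b (dil_cube c (dcorner 0 (fst km) (snd km)) (dside (fst km))) powr p))"
  define g where "g = (\<lambda>km :: int \<times> (int^'n).
    (fst km, \<chi> i. snd km $ i + \<lfloor>(-1) powi (fst km) * \<omega>$i\<rfloor>))"
  have "inj g" unfolding g_def by (rule injI) (auto simp: vec_eq_iff prod_eq_iff)
  moreover have "ennreal (osc w b (dcube \<omega> k m) powr p) \<le> K * D (g (k, m))" for k m
    using osc_dcube_powr_le_osc_dil_cube_powr[OF A2 b less_imp_le[OF p] c]
    unfolding K_def D_def g_def by simp
  ultimately have "besovD_pow w p \<omega> b \<le> (\<Sum>z\<in>{()}. \<integral>\<^sup>+y. K * D y \<partial>count_space UNIV)"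
    unfolding besovD_pow_def
    by (intro nn_integral_count_space_le_sum_fibres[where cls="\<lambda>_. ()" and tgt=g])
      (auto intro: inj_on_subset)
  also have "\<dots> = K * besov_dil_pow w p c b"
    unfolding besov_dil_pow_def D_def by (simp add: nn_integral_cmult)
  finally show ?thesis unfolding K_def .
qed

lemma osc_dil_cube_powr_le_osc_dcube_powr:
  fixes w b :: "real^'n \<Rightarrow> real"
  assumes A2: "A2 w" "A2_bounded_by w C" "0 \<le> C" and b: "loc_int b" and p: "0 \<le> p" and c: "0 < c"
    and sub: "dil_cube c (dcorner 0 k m) (dside k) \<subseteq> dcube \<omega> (k - int j) m'"
  shows "ennreal (osc w b (dil_cube c (dcorner 0 k m) (dside k)) powr p)
    \<le> ennreal ((2 * C * ((2 ^ j / c) ^ CARD('n))^2) powr p) * ennreal (osc w b (dcube \<omega> (k - int j) m') powr p)"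
proof -
  define Q where "Q = dil_cube c (dcorner 0 k m) (dside k)"
  have "Q \<subseteq> hcube (dcorner \<omega> (k - int j) m') (2 ^ j * dside k)"
    using sub unfolding Q_def dcube_def dside_diff .
  moreover have "Q \<in> sets lebesgue"
    unfolding Q_def dil_cube_dcorner_0 by (rule hcube_lebesgue)
  moreover have "measure lebesgue Q = (c * dside k) ^ CARD('n)"
    unfolding Q_def dil_cube_dcorner_0 using c dside_pos[of k] by (intro measure_hcube) simp
  ultimately have "ennreal (osc w b Q powr p) \<le>
      ennreal ((2 * C * ((2 ^ j * dside k / (c * dside k)) ^ CARD('n))^2) powr p) *
      ennreal (osc w b (hcube (dcorner \<omega> (k - int j) m') (2 ^ j * dside k)) powr p)"
    using c dside_pos[of k] by (intro osc_powr_le_osc_hcube_powr[OF A2 b p]) simp_all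
  then show ?thesis
    using dside_pos[of k] unfolding Q_def dcube_def by (simp add: dside_diff)
qed

text \<open>Dilates with the same \<open>\<omega>\<close> and the same index
  modulo \<open>2\<^sup>j\<close> get different cubes, so at most \<open>2\<^sup>j\<^sup>n\<close> dilates share a cube.\<close>
lemma dil_cube_assignment:
  assumes c: "0 < c" "3 * c \<le> 2 ^ j"
  obtains sel :: "int \<times> (int^'n) \<Rightarrow> (real^'n) \<times> (int^'n)" where
    "\<And>k m. fst (sel (k, m)) \<in> Omega"
    "\<And>k m. dil_cube c (dcorner 0 k m) (dside k) \<subseteq> dcube (fst (sel (k, m))) (k - int j) (snd (sel (k, m)))"
    "\<And>z. inj_on (\<lambda>km. (fst km - int j, snd (sel km))) {km. (fst (sel km), \<chi> i. snd km $ i mod 2^j) = z}"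
proof -
  have "\<forall>km. \<exists>z. fst z \<in> Omega \<and>
      dil_cube c (dcorner 0 (fst km) (snd km)) (dside (fst km)) \<subseteq> dcube (fst z) (fst km - int j) (snd z)"
    using dil_cube_subset_dcube[OF c] by fastforce
  then obtain sel :: "int \<times> (int^'n) \<Rightarrow> (real^'n) \<times> (int^'n)" where sel: "\<And>km. fst (sel km) \<in> Omega \<and>
      dil_cube c (dcorner 0 (fst km) (snd km)) (dside (fst km)) \<subseteq> dcube (fst (sel km)) (fst km - int j) (snd (sel km))"
    by metis
  have inj: "inj_on (\<lambda>km. (fst km - int j, snd (sel km))) {km. (fst (sel km), \<chi> i. snd km $ i mod 2^j) = z}"
    for z
  proof (rule inj_onI)
    fix x y assume "x \<in> {km. (fst (sel km), \<chi> i. snd km $ i mod 2^j) = z}"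
      "y \<in> {km. (fst (sel km), \<chi> i. snd km $ i mod 2^j) = z}"
      and t: "(fst x - int j, snd (sel x)) = (fst y - int j, snd (sel y))"
    then have "fst (sel x) = fst (sel y)" "\<And>i. snd x $ i mod 2^j = snd y $ i mod 2^j"
      "fst x = fst y" "snd (sel x) = snd (sel y)"
      by (auto simp: vec_eq_iff)
    then have "snd x = snd y"
      using dil_cube_subset_dcube_unique[OF c(1)] sel[of x] sel[of y] by metis
    with \<open>fst x = fst y\<close> show "x = y" by (simp add: prod_eq_iff)
  qed
  show ?thesis
  proof (rule that)
    show "fst (sel (k, m)) \<in> Omega" for k m
      using sel[of "(k, m)"] by simp
    show "dil_cube c (dcorner 0 k m) (dside k) \<subseteq> dcube (fst (sel (k, m))) (k - int j) (snd (sel (k, m)))"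
      for k m using sel[of "(k, m)"] by simp
  qed (rule inj)
qed

lemma besov_dil_pow_le_sum_besovD_pow:
  fixes w b :: "real^'n \<Rightarrow> real"
  assumes A2: "A2 w" "A2_bounded_by w C" "0 \<le> C" and b: "loc_int b" and p: "0 < p"
    and c: "0 < c" "3 * c \<le> 2 ^ j"
  shows "besov_dil_pow w p c b \<le> ennreal (2 ^ (j * CARD('n)) * (2 * C * ((2 ^ j / c) ^ CARD('n))^2) powr p)
    * (\<Sum>\<omega>\<in>Omega. besovD_pow w p \<omega> b)"
proof -
  define K where "K = ennreal ((2 * C * ((2 ^ j / c) ^ CARD('n))^2) powr p)"
  define R where "R = {r :: int^'n. \<forall>i. r$i \<in> {0..<2^j}}"
  obtain sel :: "int \<times> (int^'n) \<Rightarrow> (real^'n) \<times> (int^'n)" where sel: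
    "\<And>k m. fst (sel (k, m)) \<in> Omega"
    "\<And>k m. dil_cube c (dcorner 0 k m) (dside k) \<subseteq> dcube (fst (sel (k, m))) (k - int j) (snd (sel (k, m)))"
    "\<And>z. inj_on (\<lambda>km. (fst km - int j, snd (sel km))) {km. (fst (sel km), \<chi> i. snd km $ i mod 2^j) = z}"
    using dil_cube_assignment[OF c] by blast
  have "finite (Omega \<times> R)"
    unfolding R_def by (intro finite_cartesian_product finite_Omega finite_vec_set) simp
  moreover have "(fst (sel km), \<chi> i. snd km $ i mod 2^j) \<in> Omega \<times> R" for km
    using sel(1)[of "fst km" "snd km"] unfolding R_def by auto
  moreover have "ennreal (osc w b (dil_cube c (dcorner 0 (fst km) (snd km)) (dside (fst km))) powr p)
      \<le> K * ennreal (osc w b (dcube (fst (sel km)) (fst km - int j) (snd (sel km))) powr p)" for km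
    using osc_dil_cube_powr_le_osc_dcube_powr[OF A2 b less_imp_le[OF p] c(1) sel(2)[of "fst km" "snd km"]]
    unfolding K_def by simp
  ultimately have "besov_dil_pow w p c b \<le> (\<Sum>z\<in>Omega \<times> R.
      \<integral>\<^sup>+y. K * ennreal (osc w b (dcube (fst z) (fst y) (snd y)) powr p) \<partial>count_space UNIV)"
    unfolding besov_dil_pow_def
    by (intro nn_integral_count_space_le_sum_fibres[where cls="\<lambda>km. (fst (sel km), \<chi> i. snd km $ i mod 2^j)"
          and tgt="\<lambda>km. (fst km - int j, snd (sel km))"] sel(3)) auto
  also have "\<dots> = (\<Sum>\<omega>\<in>Omega. \<Sum>r\<in>R. K * besovD_pow w p \<omega> b)"
    unfolding besovD_pow_def sum.cartesian_product by (simp add: nn_integral_cmult case_prod_beta)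
  also have "\<dots> = of_nat (card R) * K * (\<Sum>\<omega>\<in>Omega. besovD_pow w p \<omega> b)"
    by (simp add: sum_distrib_left mult.assoc)
  also have "card R = 2 ^ (j * CARD('n))"
    unfolding R_def card_vec_set by (simp add: nat_power_eq power_mult)
  finally show ?thesis
    unfolding K_def by (simp add: ennreal_mult ennreal_of_nat_eq_real_of_nat)
qed

lemma enn2real_powr_le_sum:
  fixes X :: ennreal and Y :: "'a \<Rightarrow> ennreal"
  assumes S: "finite S" and r: "0 < r" and M: "0 \<le> M"
    and XY: "X \<le> ennreal M * (\<Sum>\<omega>\<in>S. Y \<omega>)" and Y: "\<And>\<omega>. \<omega> \<in> S \<Longrightarrow> Y \<omega> < \<infinity>"
  shows "enn2real X powr r \<le> (M * card S) powr r * (\<Sum>\<omega>\<in>S. enn2real (Y \<omega>) powr r)"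
proof -
  define T where "T = (\<Sum>\<omega>\<in>S. enn2real (Y \<omega>) powr r)"
  have T: "0 \<le> T" unfolding T_def by (simp add: sum_nonneg)
  have "enn2real (Y \<omega>) \<le> T powr (1 / r)" if "\<omega> \<in> S" for \<omega>
  proof -
    have "enn2real (Y \<omega>) powr r \<le> T"
      unfolding T_def by (rule member_le_sum[OF that _ S]) simp
    then have "(enn2real (Y \<omega>) powr r) powr (1 / r) \<le> T powr (1 / r)"
      using r by (intro powr_mono2) auto
    then show ?thesis using r by (simp add: powr_powr)
  qed
  then have "(\<Sum>\<omega>\<in>S. enn2real (Y \<omega>)) \<le> card S * T powr (1 / r)"
    by (rule sum_bounded_above)
  moreover have "enn2real X \<le> M * (\<Sum>\<omega>\<in>S. enn2real (Y \<omega>))"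
    using enn2real_mono[OF XY] Y M
    by (simp add: enn2real_mult enn2real_sum ennreal_mult_less_top ennreal_sum_less_top[OF S])
  ultimately have "enn2real X \<le> M * card S * T powr (1 / r)"
    using M by (metis mult.assoc mult_left_mono order.trans)
  then have "enn2real X powr r \<le> (M * card S * T powr (1 / r)) powr r"
    using r by (intro powr_mono2) auto
  also have "\<dots> = (M * card S) powr r * T"
    using M T r by (simp add: powr_mult powr_powr)
  finally show ?thesis unfolding T_def .
qed

lemma sum_enn2real_powr_le:
  fixes X :: ennreal and Y :: "'a \<Rightarrow> ennreal"
  assumes r: "0 \<le> r" and K: "0 \<le> K" and X: "X < \<infinity>"
    and YX: "\<And>\<omega>. \<omega> \<in> S \<Longrightarrow> Y \<omega> \<le> ennreal K * X"
  shows "(\<Sum>\<omega>\<in>S. enn2real (Y \<omega>) powr r) \<le> card S * (K powr r * enn2real X powr r)"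
proof (rule sum_bounded_above)
  fix \<omega> assume "\<omega> \<in> S"
  have "enn2real (Y \<omega>) \<le> K * enn2real X"
    using enn2real_mono[OF YX[OF \<open>\<omega> \<in> S\<close>]] X K by (simp add: enn2real_mult ennreal_mult_less_top)
  then have "enn2real (Y \<omega>) powr r \<le> (K * enn2real X) powr r"
    using r by (intro powr_mono2) auto
  then show "enn2real (Y \<omega>) powr r \<le> K powr r * enn2real X powr r"
    using K by (simp add: powr_mult)
qed

lemma besovD_pow_le_besov_pow:
  fixes w :: "real^'n \<Rightarrow> real"
  assumes "A2 w" "0 < p"
  shows "\<exists>K\<ge>0. \<forall>\<omega> b. loc_int b \<longrightarrow> besovD_pow w p \<omega> b \<le> ennreal K * besov_pow w p b"
proof -
  obtain C where C: "0 \<le> C" "A2_bounded_by w C" using A2_imp_bounded_by[OF assms(1)] by blast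
  define c where "c = 20 * sqrt (real CARD('n))"
  have "1 \<le> sqrt (real CARD('n))" by simp
  then have "3 \<le> c" unfolding c_def by linarith
  with besovD_pow_le_besov_dil_pow[OF assms(1) C(2,1) _ assms(2)] show ?thesis
    unfolding besov_pow_eq_besov_dil_pow c_def[symmetric]
    by (intro exI[of _ "(2 * C * (c ^ CARD('n))^2) powr p"]) auto
qed

lemma besov_pow_le_sum_besovD_pow:
  fixes w :: "real^'n \<Rightarrow> real"
  assumes "A2 w" "0 < p"
  shows "\<exists>M\<ge>0. \<forall>b. loc_int b \<longrightarrow> besov_pow w p b \<le> ennreal M * (\<Sum>\<omega>\<in>Omega. besovD_pow w p \<omega> b)"
proof -
  obtain C where C: "0 \<le> C" "A2_bounded_by w C" using A2_imp_bounded_by[OF assms(1)] by blast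
  define c where "c = 20 * sqrt (real CARD('n))"
  have c: "0 < c" unfolding c_def by simp
  obtain j :: nat where "3 * c < 2 ^ j" using real_arch_pow[of 2 "3 * c"] by auto
  with besov_dil_pow_le_sum_besovD_pow[OF assms(1) C(2,1) _ assms(2) c] show ?thesis
    unfolding besov_pow_eq_besov_dil_pow c_def[symmetric]
    by (intro exI[of _ "2 ^ (j * CARD('n)) * (2 * C * ((2 ^ j / c) ^ CARD('n))^2) powr p"]) auto
qed

lemma Besov_eq_Inter_BesovD:
  fixes \<nu> :: "real^'n \<Rightarrow> real"
  assumes "A2 \<nu>" "0 < p"
  shows "Besov \<nu> p = (\<Inter>\<omega>\<in>Omega. BesovD \<nu> p \<omega>)"
proof (intro equalityI subsetI)
  fix b assume "b \<in> Besov \<nu> p"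
  then have b: "loc_int b" "besov_pow \<nu> p b < \<infinity>" unfolding Besov_def by auto
  obtain K where K: "\<And>\<omega>. besovD_pow \<nu> p \<omega> b \<le> ennreal K * besov_pow \<nu> p b"
    using besovD_pow_le_besov_pow[OF assms] b(1) by blast
  have "besovD_pow \<nu> p \<omega> b < \<infinity>" for \<omega>
    using le_less_trans[OF K] b(2) by (simp add: ennreal_mult_less_top)
  with b(1) show "b \<in> (\<Inter>\<omega>\<in>Omega. BesovD \<nu> p \<omega>)"
    unfolding BesovD_def by auto
next
  fix b assume "b \<in> (\<Inter>\<omega>\<in>Omega. BesovD \<nu> p \<omega>)"
  then have b: "loc_int b" "(\<Sum>\<omega>\<in>Omega. besovD_pow \<nu> p \<omega> b) < \<infinity>"
    using zero_in_Omega by (auto simp: BesovD_def ennreal_sum_less_top[OF finite_Omega])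
  obtain M where M: "besov_pow \<nu> p b \<le> ennreal M * (\<Sum>\<omega>\<in>Omega. besovD_pow \<nu> p \<omega> b)"
    using besov_pow_le_sum_besovD_pow[OF assms] b(1) by blast
  have "besov_pow \<nu> p b < \<infinity>"
    using le_less_trans[OF M] b(2) by (simp add: ennreal_mult_less_top)
  with b(1) show "b \<in> Besov \<nu> p"
    unfolding Besov_def by auto
qed

lemma besov_norm_equiv:
  fixes \<nu> :: "real^'n \<Rightarrow> real"
  assumes "A2 \<nu>" "0 < p"
  shows "\<exists>C>0. \<forall>b \<in> Besov \<nu> p.
    besov_norm \<nu> p b \<le> C * (\<Sum>\<omega>\<in>Omega. besovD_norm \<nu> p \<omega> b) \<and>
    (\<Sum>\<omega>\<in>Omega. besovD_norm \<nu> p \<omega> b) \<le> C * besov_norm \<nu> p b"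
proof -
  obtain K where K: "0 \<le> K" "\<And>\<omega> b. loc_int b \<Longrightarrow> besovD_pow \<nu> p \<omega> b \<le> ennreal K * besov_pow \<nu> p b"
    using besovD_pow_le_besov_pow[OF assms] by blast
  obtain M where M: "0 \<le> M"
    "\<And>b. loc_int b \<Longrightarrow> besov_pow \<nu> p b \<le> ennreal M * (\<Sum>\<omega>\<in>Omega. besovD_pow \<nu> p \<omega> b)"
    using besov_pow_le_sum_besovD_pow[OF assms] by blast
  define N where "N = real (card (Omega :: (real^'n) set))"
  define C where "C = max ((M * N) powr (1 / p)) (N * K powr (1 / p)) + 1"
  have "besov_norm \<nu> p b \<le> C * (\<Sum>\<omega>\<in>Omega. besovD_norm \<nu> p \<omega> b) \<and>
        (\<Sum>\<omega>\<in>Omega. besovD_norm \<nu> p \<omega> b) \<le> C * besov_norm \<nu> p b" if "b \<in> Besov \<nu> p" for b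
  proof
    have b: "loc_int b" "besov_pow \<nu> p b < \<infinity>"
      using that unfolding Besov_def by auto
    have Y: "\<And>\<omega>. \<omega> \<in> Omega \<Longrightarrow> besovD_pow \<nu> p \<omega> b < \<infinity>"
      using that unfolding Besov_eq_Inter_BesovD[OF assms] BesovD_def by auto
    have "besov_norm \<nu> p b \<le> (M * N) powr (1 / p) * (\<Sum>\<omega>\<in>Omega. besovD_norm \<nu> p \<omega> b)"
      unfolding besov_norm_def besovD_norm_def N_def
      using assms(2) by (intro enn2real_powr_le_sum[OF finite_Omega _ M(1) M(2)[OF b(1)] Y]) auto
    also have "\<dots> \<le> C * (\<Sum>\<omega>\<in>Omega. besovD_norm \<nu> p \<omega> b)"
      unfolding C_def besovD_norm_def by (intro mult_right_mono sum_nonneg) auto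
    finally show "besov_norm \<nu> p b \<le> C * (\<Sum>\<omega>\<in>Omega. besovD_norm \<nu> p \<omega> b)" .
    have "(\<Sum>\<omega>\<in>Omega. besovD_norm \<nu> p \<omega> b) \<le> N * (K powr (1 / p) * besov_norm \<nu> p b)"
      unfolding besov_norm_def besovD_norm_def N_def
      using assms(2) by (intro sum_enn2real_powr_le[OF _ K(1) b(2) K(2)[OF b(1)]]) auto
    also have "\<dots> \<le> C * besov_norm \<nu> p b"
      unfolding C_def besov_norm_def by (simp add: mult.assoc[symmetric] mult_right_mono)
    finally show "(\<Sum>\<omega>\<in>Omega. besovD_norm \<nu> p \<omega> b) \<le> C * besov_norm \<nu> p b" .
  qed
  moreover have "0 < C"
    using max.cobounded1[of "(M * N) powr (1 / p)"] powr_ge_zero[of "M * N" "1 / p"]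
    unfolding C_def by linarith
  ultimately show ?thesis by blast
qed

theorem theorem3p4:
  fixes \<nu> :: "real^'n \<Rightarrow> real" and p :: real
  assumes "A2 \<nu>" and "0 < p"
  shows "Besov \<nu> p = (\<Inter>\<omega>\<in>(Omega :: (real^'n) set). BesovD \<nu> p \<omega>) \<and>
    (\<exists>C>0. \<forall>b \<in> Besov \<nu> p.
        besov_norm \<nu> p b \<le> C * (\<Sum>\<omega>\<in>Omega. besovD_norm \<nu> p \<omega> b) \<and>
        (\<Sum>\<omega>\<in>Omega. besovD_norm \<nu> p \<omega> b) \<le> C * besov_norm \<nu> p b)"
  using Besov_eq_Inter_BesovD[OF assms] besov_norm_equiv[OF assms] by blast

end
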